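(* For every $k\in[K]$, the function $f_k:\mathbb{R}^K_{\ge0}\setminus\{\mathbf{0}\}\to\mathbb{R}$ is a $0$-homogeneous rational function of ${\bm{r}}$.
   Context: Setting: distributions $\mathcal{D}_1,\dots,\mathcal{D}_K$ on $\mathcal{Z}$, a loss $\ell(h,{\bm{z}})$ (all expectations finite), $N\ge1$, and a learning algorithm $\mathcal{A}:\mathcal{Z}^N\to\mathcal{H}$. For ${\bm{r}}\in\Delta_K=\{{\bm{r}}\ge0:\sum_kr_k=1\}$, $\bar e_k({\bm{r}})=\mathbb{E}_{S\sim(\sum_jr_j\mathcal{D}_j)^N}\mathbb{E}_{{\bm{z}}\sim\mathcal{D}_k}[\ell(\mathcal{A}(S),{\bm{z}})]$, and $f_k({\bm{r}})=\bar e_k({\bm{r}}/|{\bm{r}}|)$ for ${\bm{r}}\in\mathbb{R}^K_{\ge0}\setminus\{\mathbf{0}\}$, $|{\bm{r}}|=\sum_jr_j$. *)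

theory Defs
  imports "HOL-Probability.Probability"
begin

text \<open>Vectors in R^K are functions from a finite index type 'n (with K = CARD('n))
  to the reals.\<close>

definition mpoly_fun :: "(('n::finite \<Rightarrow> real) \<Rightarrow> real) \<Rightarrow> bool" where
  "mpoly_fun p \<longleftrightarrow> (\<exists>C c. finite C \<and>
     (\<forall>r. p r = (\<Sum>\<alpha>\<in>C. c \<alpha> * (\<Prod>j\<in>UNIV. r j ^ \<alpha> j))))"

definition rational_fun_on :: "('n::finite \<Rightarrow> real) set \<Rightarrow> (('n \<Rightarrow> real) \<Rightarrow> real) \<Rightarrow> bool" where
  "rational_fun_on U f \<longleftrightarrow> (\<exists>P Q. mpoly_fun P \<and> mpoly_fun Q \<and>
     (\<forall>r\<in>U. Q r \<noteq> 0 \<and> f r = P r / Q r))"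

definition zero_homogeneous_on :: "('n::finite \<Rightarrow> real) set \<Rightarrow> (('n \<Rightarrow> real) \<Rightarrow> real) \<Rightarrow> bool" where
  "zero_homogeneous_on U f \<longleftrightarrow> (\<forall>r\<in>U. \<forall>c::real. c > 0 \<longrightarrow> f (\<lambda>j. c * r j) = f r)"

definition pos_orthant :: "('n::finite \<Rightarrow> real) set" where
  "pos_orthant = {r. (\<forall>j. 0 \<le> r j) \<and> r \<noteq> (\<lambda>_. 0)}"

definition mixture :: "'z measure \<Rightarrow> ('n::finite \<Rightarrow> 'z measure) \<Rightarrow> ('n \<Rightarrow> real) \<Rightarrow> 'z measure" where
  "mixture M D r = measure_of (space M) (sets M)
     (\<lambda>A. \<Sum>j\<in>UNIV. ennreal (r j) * emeasure (D j) A)"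

text \<open>bar e_k(r) = E_{S ~ (sum_j r_j D_j)^N} E_{z ~ D_k} [loss (A S) z];
  a sample S in Z^N is a function on {..<N}.\<close>

definition ebar :: "'z measure \<Rightarrow> ('n::finite \<Rightarrow> 'z measure) \<Rightarrow> ('h \<Rightarrow> 'z \<Rightarrow> real)
     \<Rightarrow> nat \<Rightarrow> ((nat \<Rightarrow> 'z) \<Rightarrow> 'h) \<Rightarrow> 'n \<Rightarrow> ('n \<Rightarrow> real) \<Rightarrow> real" where
  "ebar M D loss N A k r =
     (\<integral>S. (\<integral>z. loss (A S) z \<partial>(D k)) \<partial>(PiM {..<N} (\<lambda>_. mixture M D r)))"

definition fk :: "'z measure \<Rightarrow> ('n::finite \<Rightarrow> 'z measure) \<Rightarrow> ('h \<Rightarrow> 'z \<Rightarrow> real)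
     \<Rightarrow> nat \<Rightarrow> ((nat \<Rightarrow> 'z) \<Rightarrow> 'h) \<Rightarrow> 'n \<Rightarrow> ('n \<Rightarrow> real) \<Rightarrow> real" where
  "fk M D loss N A k r = ebar M D loss N A k (\<lambda>j. r j / (\<Sum>i\<in>UNIV. r i))"

end

theory Submission
  imports Defs
begin

text \<open>Expanding the \<open>N\<close>-fold power of the mixture \<open>\<Sum>\<^sub>j r\<^sub>j D\<^sub>j\<close> multilinearly, the law
  of the sample is \<open>\<Sum>\<^sub>\<sigma> (\<Prod>\<^sub>i r (\<sigma> i)) \<Otimes>\<^sub>i D (\<sigma> i)\<close>, summed over all maps \<open>\<sigma>\<close>
  from sample positions to components. Hence on the simplex \<open>e\<^sub>k\<close> is a homogeneous polynomial
  of degree \<open>N\<close> whose coefficients are the expected losses under the product measures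
  \<open>\<Otimes>\<^sub>i D (\<sigma> i)\<close>; these are finite because the uniform mixture dominates each of them
  up to a positive factor. At \<open>r / |r|\<close> the polynomial becomes \<open>p r / |r|\<^sup>N\<close>, a rational
  function invariant under scaling.\<close>

lemma sets_mixture [simp, measurable_cong]: "sets (mixture M D r) = sets M"
  unfolding mixture_def by (simp add: sets.space_closed)

lemma space_mixture [simp]: "space (mixture M D r) = space M"
  unfolding mixture_def by (simp add: sets.space_closed)

lemma emeasure_mixture:
  assumes sets_D: "\<And>j. sets (D j) = sets M" and A: "A \<in> sets M"
  shows "emeasure (mixture M D r) A = (\<Sum>j\<in>UNIV. ennreal (r j) * emeasure (D j) A)"
  unfolding mixture_def
proof (rule emeasure_measure_of_sigma[OF sets.sigma_algebra_axioms _ _ A])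
  show "positive (sets M) (\<lambda>A. \<Sum>j\<in>UNIV. ennreal (r j) * emeasure (D j) A)"
    by (simp add: positive_def)
  show "countably_additive (sets M) (\<lambda>A. \<Sum>j\<in>UNIV. ennreal (r j) * emeasure (D j) A)"
    unfolding countably_additive_def
  proof (intro allI impI)
    fix F :: "nat \<Rightarrow> _"
    assume F: "range F \<subseteq> sets M" "disjoint_family F" "\<Union> (range F) \<in> sets M"
    have "(\<Sum>n. \<Sum>j\<in>UNIV. ennreal (r j) * emeasure (D j) (F n))
        = (\<Sum>j\<in>UNIV. \<Sum>n. ennreal (r j) * emeasure (D j) (F n))"
      by (rule suminf_sum) auto
    also have "\<dots> = (\<Sum>j\<in>UNIV. ennreal (r j) * emeasure (D j) (\<Union> (range F)))"
      using F sets_D by (simp add: suminf_emeasure)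
    finally show "(\<Sum>n. \<Sum>j\<in>UNIV. ennreal (r j) * emeasure (D j) (F n))
        = (\<Sum>j\<in>UNIV. ennreal (r j) * emeasure (D j) (\<Union> (range F)))" .
  qed
qed

lemma finite_measure_mixture:
  assumes finite_D: "\<And>j. finite_measure (D j)" and sets_D: "\<And>j. sets (D j) = sets M"
  shows "finite_measure (mixture M D r)"
proof
  have "emeasure (D j) (space M) \<noteq> \<infinity>" for j
    using finite_measure.emeasure_finite[OF finite_D, of j "space M"] by simp
  then show "emeasure (mixture M D r) (space (mixture M D r)) \<noteq> \<infinity>"
    using sets_D by (simp add: emeasure_mixture ennreal_mult_eq_top_iff)
qed

lemma prob_space_mixture:
  assumes prob_D: "\<And>j. prob_space (D j)" and sets_D: "\<And>j. sets (D j) = sets M"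
    and r: "\<forall>j. 0 \<le> r j" "(\<Sum>j\<in>UNIV. r j) = 1"
  shows "prob_space (mixture M D r)"
proof
  have "emeasure (D j) (space M) = 1" for j
    using prob_space.emeasure_space_1[OF prob_D] sets_eq_imp_space_eq[OF sets_D] by metis
  then show "emeasure (mixture M D r) (space (mixture M D r)) = 1"
    using sets_D r by (simp add: emeasure_mixture sum_ennreal)
qed

lemma nn_integral_mixture:
  assumes sets_D: "\<And>j. sets (D j) = sets M" and f: "f \<in> borel_measurable M"
  shows "(\<integral>\<^sup>+x. f x \<partial>mixture M D r) = (\<Sum>j\<in>UNIV. ennreal (r j) * (\<integral>\<^sup>+x. f x \<partial>D j))"
  using f
proof induction
  case (cong f g)
  have "space (D j) = space M" for j
    using sets_D sets_eq_imp_space_eq by blast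
  with cong show ?case
    by (simp cong: nn_integral_cong_simp)
next
  case (set A)
  then show ?case
    using sets_D by (simp add: emeasure_mixture)
next
  case (mult f c)
  then show ?case
    using sets_D by (simp add: nn_integral_cmult sum_distrib_left mult.left_commute
        cong: measurable_cong_sets)
next
  case (add f g)
  then show ?case
    using sets_D by (simp add: nn_integral_add distrib_left sum.distrib cong: measurable_cong_sets)
next
  case (seq U)
  have U: "U i \<in> borel_measurable (D j)" for i j
    using seq sets_D by (simp cong: measurable_cong_sets)
  have "(\<integral>\<^sup>+x. (SUP i. U i) x \<partial>mixture M D r) = (SUP i. \<integral>\<^sup>+x. U i x \<partial>mixture M D r)"
    using seq by (simp add: nn_integral_monotone_convergence_SUP image_comp
        cong: measurable_cong_sets)
  also have "\<dots> = (SUP i. \<Sum>j\<in>UNIV. ennreal (r j) * (\<integral>\<^sup>+x. U i x \<partial>D j))"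
    using seq by simp
  also have "\<dots> = (\<Sum>j\<in>UNIV. SUP i. ennreal (r j) * (\<integral>\<^sup>+x. U i x \<partial>D j))"
    by (rule ennreal_SUP_sum)
      (use seq(3) U in \<open>auto simp: incseq_def le_fun_def intro!: mult_left_mono nn_integral_mono\<close>)
  also have "\<dots> = (\<Sum>j\<in>UNIV. ennreal (r j) * (\<integral>\<^sup>+x. (SUP i. U i) x \<partial>D j))"
    using seq U by (simp add: nn_integral_monotone_convergence_SUP SUP_mult_left_ennreal image_comp)
  finally show ?case .
qed

lemma sets_PiM_mixture: "sets (PiM I (\<lambda>_. mixture M D r)) = sets (PiM I (\<lambda>_. M))"
  by (rule sets_PiM_cong) simp_all

lemma sets_PiM_component:
  assumes "\<And>j. sets (D j) = sets M"
  shows "sets (PiM I (\<lambda>i. D (\<sigma> i))) = sets (PiM I (\<lambda>_. M))"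
  by (rule sets_PiM_cong) (simp_all add: assms)

lemma sum_PiE_insert:
  assumes "i \<notin> I"
  shows "(\<Sum>\<sigma>\<in>PiE (insert i I) B. h \<sigma>) = (\<Sum>(j, \<sigma>)\<in>B i \<times> PiE I B. h (\<sigma>(i := j)))"
  unfolding PiE_insert_eq
  by (subst sum.reindex[OF inj_combinator[OF assms]]) (simp add: case_prod_unfold)

lemma nn_integral_PiM_fun_upd:
  assumes sigma_finite_D: "\<And>j. sigma_finite_measure (D j)" and I: "finite I" "i \<notin> I"
    and f: "f \<in> borel_measurable (PiM (insert i I) (\<lambda>k. D ((\<sigma>(i := j)) k)))"
  shows "(\<integral>\<^sup>+x. f x \<partial>PiM (insert i I) (\<lambda>k. D ((\<sigma>(i := j)) k)))
       = (\<integral>\<^sup>+x. (\<integral>\<^sup>+y. f (x(i := y)) \<partial>D j) \<partial>PiM I (\<lambda>k. D (\<sigma> k)))"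
proof -
  interpret product_sigma_finite "\<lambda>k. D ((\<sigma>(i := j)) k)"
    unfolding product_sigma_finite_def using sigma_finite_D by blast
  have "PiM I (\<lambda>k. D ((\<sigma>(i := j)) k)) = PiM I (\<lambda>k. D (\<sigma> k))"
    using I by (intro PiM_cong) auto
  then show ?thesis
    using product_nn_integral_insert[OF I f] by simp
qed

lemma nn_integral_PiM_mixture:
  assumes finite_D: "\<And>j. finite_measure (D j)" and sets_D: "\<And>j. sets (D j) = sets M"
    and I: "finite I" and f: "f \<in> borel_measurable (PiM I (\<lambda>_. M))"
  shows "(\<integral>\<^sup>+x. f x \<partial>PiM I (\<lambda>_. mixture M D r)) =
    (\<Sum>\<sigma>\<in>PiE I (\<lambda>_. UNIV). (\<Prod>i\<in>I. ennreal (r (\<sigma> i))) * (\<integral>\<^sup>+x. f x \<partial>PiM I (\<lambda>i. D (\<sigma> i))))"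
  using I f
proof (induction I arbitrary: f rule: finite_induct)
  case empty
  then show ?case by (simp add: PiM_empty)
next
  case (insert i I)
  have sigma_finite_D: "sigma_finite_measure (D j)" for j
    by (rule finite_measure.sigma_finite_measure[OF finite_D])
  interpret mix: product_sigma_finite "\<lambda>_. mixture M D r"
    by (simp add: product_sigma_finite_def
        finite_measure.sigma_finite_measure[OF finite_measure_mixture[OF finite_D sets_D]])
  define g where "g j x = (\<integral>\<^sup>+y. f (x(i := y)) \<partial>D j)" for j x
  have f_upd: "(\<lambda>(x, y). f (x(i := y))) \<in> borel_measurable (PiM I (\<lambda>_. M) \<Otimes>\<^sub>M D j)" for j
  proof -
    have "(\<lambda>(x, y). x(i := y)) \<in> measurable (PiM I (\<lambda>_. M) \<Otimes>\<^sub>M D j) (PiM (insert i I) (\<lambda>_. M))"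
      using sets_D by (simp cong: measurable_cong_sets)
    from measurable_comp[OF this insert.prems] show ?thesis
      by (simp add: comp_def case_prod_unfold)
  qed
  have g: "g j \<in> borel_measurable (PiM I (\<lambda>_. M))" for j
    unfolding g_def using sigma_finite_measure.borel_measurable_nn_integral[OF sigma_finite_D f_upd]
    by simp
  have f_sets: "f \<in> borel_measurable (PiM (insert i I) (\<lambda>k. D ((\<sigma>(i := j)) k)))" for \<sigma> j
    unfolding measurable_cong_sets[OF sets_PiM_component[OF sets_D, of "insert i I" "\<sigma>(i := j)"] refl]
    by (rule insert.prems)
  have "(\<integral>\<^sup>+x. f x \<partial>PiM (insert i I) (\<lambda>_. mixture M D r))
      = (\<integral>\<^sup>+x. (\<integral>\<^sup>+y. f (x(i := y)) \<partial>mixture M D r) \<partial>PiM I (\<lambda>_. mixture M D r))"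
    using insert.prems measurable_cong_sets[OF sets_PiM_mixture refl]
    by (intro mix.product_nn_integral_insert insert.hyps) blast
  also have "\<dots> = (\<integral>\<^sup>+x. (\<Sum>j\<in>UNIV. ennreal (r j) * g j x) \<partial>PiM I (\<lambda>_. mixture M D r))"
  proof (rule nn_integral_cong)
    fix x assume "x \<in> space (PiM I (\<lambda>_. mixture M D r))"
    then have x: "x \<in> space (PiM I (\<lambda>_. M))"
      by (simp add: space_PiM)
    have "(\<lambda>y. f (x(i := y))) \<in> borel_measurable M"
      using measurable_comp[OF measurable_component_update[OF x insert.hyps(2)] insert.prems]
      by (simp add: comp_def)
    then show "(\<integral>\<^sup>+y. f (x(i := y)) \<partial>mixture M D r) = (\<Sum>j\<in>UNIV. ennreal (r j) * g j x)"
      unfolding g_def by (rule nn_integral_mixture[OF sets_D])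
  qed
  also have "\<dots> = (\<Sum>j\<in>UNIV. ennreal (r j) * (\<integral>\<^sup>+x. g j x \<partial>PiM I (\<lambda>_. mixture M D r)))"
    using g by (simp add: nn_integral_sum nn_integral_cmult measurable_cong_sets[OF sets_PiM_mixture])
  also have "\<dots> = (\<Sum>j\<in>UNIV. \<Sum>\<sigma>\<in>PiE I (\<lambda>_. UNIV).
      ennreal (r j) * (\<Prod>i\<in>I. ennreal (r (\<sigma> i))) * (\<integral>\<^sup>+x. g j x \<partial>PiM I (\<lambda>i. D (\<sigma> i))))"
    using insert.IH[OF g] by (simp add: sum_distrib_left mult.assoc)
  also have "\<dots> = (\<Sum>(j, \<sigma>)\<in>UNIV \<times> PiE I (\<lambda>_. UNIV). (\<Prod>k\<in>insert i I. ennreal (r ((\<sigma>(i := j)) k)))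
      * (\<integral>\<^sup>+x. f x \<partial>PiM (insert i I) (\<lambda>k. D ((\<sigma>(i := j)) k))))"
    unfolding sum.cartesian_product
  proof (intro sum.cong refl, clarify)
    fix j \<sigma>
    have "(\<Prod>k\<in>I. ennreal (r ((\<sigma>(i := j)) k))) = (\<Prod>k\<in>I. ennreal (r (\<sigma> k)))"
      using insert.hyps by (intro prod.cong) auto
    then have "(\<Prod>k\<in>insert i I. ennreal (r ((\<sigma>(i := j)) k))) = ennreal (r j) * (\<Prod>k\<in>I. ennreal (r (\<sigma> k)))"
      using insert.hyps by simp
    moreover have "(\<integral>\<^sup>+x. f x \<partial>PiM (insert i I) (\<lambda>k. D ((\<sigma>(i := j)) k)))
        = (\<integral>\<^sup>+x. g j x \<partial>PiM I (\<lambda>k. D (\<sigma> k)))"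
      unfolding g_def by (rule nn_integral_PiM_fun_upd[OF sigma_finite_D insert.hyps f_sets])
    ultimately show "ennreal (r j) * (\<Prod>i\<in>I. ennreal (r (\<sigma> i))) * (\<integral>\<^sup>+x. g j x \<partial>PiM I (\<lambda>i. D (\<sigma> i)))
        = (\<Prod>k\<in>insert i I. ennreal (r ((\<sigma>(i := j)) k)))
          * (\<integral>\<^sup>+x. f x \<partial>PiM (insert i I) (\<lambda>k. D ((\<sigma>(i := j)) k)))"
      by simp
  qed
  also have "\<dots> = (\<Sum>\<sigma>\<in>PiE (insert i I) (\<lambda>_. UNIV). (\<Prod>k\<in>insert i I. ennreal (r (\<sigma> k)))
      * (\<integral>\<^sup>+x. f x \<partial>PiM (insert i I) (\<lambda>k. D (\<sigma> k))))"
    unfolding sum_PiE_insert[OF insert.hyps(2)] ..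
  finally show ?case .
qed

lemma nn_integral_PiM_component_finite:
  assumes finite_D: "\<And>j. finite_measure (D j)" and sets_D: "\<And>j. sets (D j) = sets M"
    and I: "finite I" and r: "\<forall>j. 0 < r j" and \<sigma>: "\<sigma> \<in> PiE I (\<lambda>_. UNIV)"
    and h: "h \<in> borel_measurable (PiM I (\<lambda>_. M))"
    and finite_mix: "(\<integral>\<^sup>+x. h x \<partial>PiM I (\<lambda>_. mixture M D r)) < \<infinity>"
  shows "(\<integral>\<^sup>+x. h x \<partial>PiM I (\<lambda>i. D (\<sigma> i))) < \<infinity>"
proof -
  let ?w = "\<lambda>\<sigma>. \<Prod>i\<in>I. ennreal (r (\<sigma> i))"
  have "?w \<sigma> * (\<integral>\<^sup>+x. h x \<partial>PiM I (\<lambda>i. D (\<sigma> i)))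
      \<le> (\<Sum>\<tau>\<in>PiE I (\<lambda>_. UNIV). ?w \<tau> * (\<integral>\<^sup>+x. h x \<partial>PiM I (\<lambda>i. D (\<tau> i))))"
    using I \<sigma> by (intro member_le_sum) (auto simp: finite_PiE)
  also have "\<dots> < \<infinity>"
    using finite_mix nn_integral_PiM_mixture[where D=D, OF finite_D sets_D I h] by simp
  finally have "?w \<sigma> * (\<integral>\<^sup>+x. h x \<partial>PiM I (\<lambda>i. D (\<sigma> i))) < \<infinity>" .
  moreover have "?w \<sigma> = ennreal (\<Prod>i\<in>I. r (\<sigma> i))"
    using r by (intro prod_ennreal) (simp add: less_imp_le)
  moreover have "0 < (\<Prod>i\<in>I. r (\<sigma> i))"
    using r by (simp add: prod_pos)
  ultimately show ?thesis
    by (auto simp: ennreal_mult_less_top)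
qed

lemma integrable_PiM_component_of_mixture:
  fixes g :: "_ \<Rightarrow> real"
  assumes finite_D: "\<And>j. finite_measure (D j)" and sets_D: "\<And>j. sets (D j) = sets M"
    and I: "finite I" and r: "\<forall>j. 0 < r j" and \<sigma>: "\<sigma> \<in> PiE I (\<lambda>_. UNIV)"
    and g: "integrable (PiM I (\<lambda>_. mixture M D r)) g"
  shows "integrable (PiM I (\<lambda>i. D (\<sigma> i))) g"
proof -
  have g_meas: "g \<in> borel_measurable (PiM I (\<lambda>_. M))"
    using borel_measurable_integrable[OF g] measurable_cong_sets[OF sets_PiM_mixture refl] by blast
  have "(\<integral>\<^sup>+x. ennreal (g x) \<partial>PiM I (\<lambda>i. D (\<sigma> i))) < \<infinity>"
    using g g_meas unfolding real_integrable_def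
    by (intro nn_integral_PiM_component_finite[where D=D, OF finite_D sets_D I r \<sigma>])
      (auto simp: top.not_eq_extremum)
  moreover have "(\<integral>\<^sup>+x. ennreal (- g x) \<partial>PiM I (\<lambda>i. D (\<sigma> i))) < \<infinity>"
    using g g_meas unfolding real_integrable_def
    by (intro nn_integral_PiM_component_finite[where D=D, OF finite_D sets_D I r \<sigma>])
      (auto simp: top.not_eq_extremum)
  moreover have "g \<in> borel_measurable (PiM I (\<lambda>i. D (\<sigma> i)))"
    using g_meas measurable_cong_sets[OF sets_PiM_component[where D=D, OF sets_D] refl] by blast
  ultimately show ?thesis
    unfolding real_integrable_def by (simp add: top.not_eq_extremum)
qed

lemma integral_PiM_mixture:
  fixes g :: "_ \<Rightarrow> real"
  assumes finite_D: "\<And>j. finite_measure (D j)" and sets_D: "\<And>j. sets (D j) = sets M"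
    and I: "finite I" and r: "\<forall>j. 0 \<le> r j"
    and g_meas: "g \<in> borel_measurable (PiM I (\<lambda>_. M))"
    and g: "\<And>\<sigma>. \<sigma> \<in> PiE I (\<lambda>_. UNIV) \<Longrightarrow> integrable (PiM I (\<lambda>i. D (\<sigma> i))) g"
  shows "(\<integral>x. g x \<partial>PiM I (\<lambda>_. mixture M D r))
       = (\<Sum>\<sigma>\<in>PiE I (\<lambda>_. UNIV). (\<Prod>i\<in>I. r (\<sigma> i)) * (\<integral>x. g x \<partial>PiM I (\<lambda>i. D (\<sigma> i))))"
proof -
  let ?P = "\<lambda>\<sigma>. PiM I (\<lambda>i. D (\<sigma> i))" and ?w = "\<lambda>\<sigma>. \<Prod>i\<in>I. r (\<sigma> i)"
  have w: "0 \<le> ?w \<sigma>" for \<sigma>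
    using r by (simp add: prod_nonneg)
  have expand: "(\<integral>\<^sup>+x. h x \<partial>PiM I (\<lambda>_. mixture M D r))
      = (\<Sum>\<sigma>\<in>PiE I (\<lambda>_. UNIV). ennreal (?w \<sigma>) * (\<integral>\<^sup>+x. h x \<partial>?P \<sigma>))"
    if "h \<in> borel_measurable (PiM I (\<lambda>_. M))" for h
    using nn_integral_PiM_mixture[where D=D, OF finite_D sets_D I that] r by (simp add: prod_ennreal)
  have expand_real: "enn2real (\<integral>\<^sup>+x. ennreal (s * g x) \<partial>PiM I (\<lambda>_. mixture M D r))
      = (\<Sum>\<sigma>\<in>PiE I (\<lambda>_. UNIV). ?w \<sigma> * enn2real (\<integral>\<^sup>+x. ennreal (s * g x) \<partial>?P \<sigma>))"
    and finite: "(\<integral>\<^sup>+x. ennreal (s * g x) \<partial>PiM I (\<lambda>_. mixture M D r)) < \<infinity>"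
    if "s = 1 \<or> s = -1" for s :: real
    \<comment> \<open>the positive and the negative part of \<open>g\<close> at once\<close>
  proof -
    have fin: "(\<integral>\<^sup>+x. ennreal (s * g x) \<partial>?P \<sigma>) < \<infinity>" if "\<sigma> \<in> PiE I (\<lambda>_. UNIV)" for \<sigma>
      using g[OF that] \<open>s = 1 \<or> s = -1\<close> unfolding real_integrable_def
      by (auto simp: top.not_eq_extremum)
    have meas: "(\<lambda>x. ennreal (s * g x)) \<in> borel_measurable (PiM I (\<lambda>_. M))"
      using g_meas by simp
    show "enn2real (\<integral>\<^sup>+x. ennreal (s * g x) \<partial>PiM I (\<lambda>_. mixture M D r))
      = (\<Sum>\<sigma>\<in>PiE I (\<lambda>_. UNIV). ?w \<sigma> * enn2real (\<integral>\<^sup>+x. ennreal (s * g x) \<partial>?P \<sigma>))"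
      unfolding expand[OF meas] using fin w
      by (subst enn2real_sum) (auto simp: ennreal_mult_less_top enn2real_mult)
    show "(\<integral>\<^sup>+x. ennreal (s * g x) \<partial>PiM I (\<lambda>_. mixture M D r)) < \<infinity>"
      unfolding expand[OF meas] using fin
      by (simp add: ennreal_mult_less_top finite_PiE I)
  qed
  have "integrable (PiM I (\<lambda>_. mixture M D r)) g"
    using g_meas finite[of 1] finite[of "-1"] measurable_cong_sets[OF sets_PiM_mixture refl]
    unfolding real_integrable_def by auto
  then have "(\<integral>x. g x \<partial>PiM I (\<lambda>_. mixture M D r))
      = enn2real (\<integral>\<^sup>+x. ennreal (1 * g x) \<partial>PiM I (\<lambda>_. mixture M D r))
      - enn2real (\<integral>\<^sup>+x. ennreal (-1 * g x) \<partial>PiM I (\<lambda>_. mixture M D r))"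
    by (simp add: real_lebesgue_integral_def)
  also have "\<dots> = (\<Sum>\<sigma>\<in>PiE I (\<lambda>_. UNIV). ?w \<sigma> * (\<integral>x. g x \<partial>?P \<sigma>))"
    using expand_real[of 1] expand_real[of "-1"]
    by (simp add: real_lebesgue_integral_def[OF g] sum_subtractf right_diff_distrib)
  finally show ?thesis .
qed

lemma mpoly_fun_sum_monomials:
  fixes e :: "'a \<Rightarrow> 'n::finite \<Rightarrow> nat"
  assumes X: "finite X"
  shows "mpoly_fun (\<lambda>r. \<Sum>x\<in>X. c x * (\<Prod>j\<in>UNIV. r j ^ e x j))"
  unfolding mpoly_fun_def
proof (intro exI conjI allI)
  show "finite (e ` X)"
    using X by simp
  fix r :: "'n \<Rightarrow> real"
  show "(\<Sum>x\<in>X. c x * (\<Prod>j\<in>UNIV. r j ^ e x j)) =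
    (\<Sum>\<alpha>\<in>e ` X. (\<Sum>x\<in>{x\<in>X. e x = \<alpha>}. c x) * (\<Prod>j\<in>UNIV. r j ^ \<alpha> j))"
    unfolding sum.image_gen[OF X, of "\<lambda>x. c x * (\<Prod>j\<in>UNIV. r j ^ e x j)" e]
    by (intro sum.cong refl) (simp add: sum_distrib_right)
qed

lemma mpoly_fun_sum_PiE_prod:
  fixes c :: "('b \<Rightarrow> 'n::finite) \<Rightarrow> real"
  assumes I: "finite I"
  shows "mpoly_fun (\<lambda>r. \<Sum>\<sigma>\<in>PiE I (\<lambda>_. UNIV). c \<sigma> * (\<Prod>i\<in>I. r (\<sigma> i)))"
proof -
  have "(\<Prod>i\<in>I. r (\<sigma> i)) = (\<Prod>j\<in>UNIV. r j ^ card {i\<in>I. \<sigma> i = j})" for r :: "'n \<Rightarrow> real" and \<sigma>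
  proof -
    have "(\<Prod>i\<in>I. r (\<sigma> i)) = (\<Prod>j\<in>UNIV. \<Prod>i\<in>{i\<in>I. \<sigma> i = j}. r (\<sigma> i))"
      using I by (rule prod.group[symmetric]) auto
    also have "\<dots> = (\<Prod>j\<in>UNIV. r j ^ card {i\<in>I. \<sigma> i = j})"
      by (intro prod.cong refl) simp
    finally show ?thesis .
  qed
  then show ?thesis
    using mpoly_fun_sum_monomials[of "PiE I (\<lambda>_. UNIV)" c "\<lambda>\<sigma> j. card {i\<in>I. \<sigma> i = j}"] I
    by (simp add: finite_PiE)
qed

lemma mpoly_fun_sum_power: "mpoly_fun (\<lambda>r::'n::finite \<Rightarrow> real. (\<Sum>j\<in>UNIV. r j) ^ n)"
proof -
  have "(\<Sum>j\<in>UNIV. r j) ^ n = (\<Sum>\<sigma>\<in>PiE {..<n} (\<lambda>_. UNIV). 1 * (\<Prod>i\<in>{..<n}. r (\<sigma> i)))"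
    for r :: "'n \<Rightarrow> real"
    using prod_sum_PiE[of "{..<n}" "\<lambda>_. UNIV" "\<lambda>_ j. r j"] by simp
  then show ?thesis
    using mpoly_fun_sum_PiE_prod[of "{..<n}" "\<lambda>_. 1"] by simp
qed

text \<open>A homogeneous polynomial of degree \<open>n\<close> evaluated at \<open>r / |r|\<close> equals its value at
  \<open>r\<close> divided by \<open>|r|\<^sup>n\<close>.\<close>

lemma rational_fun_on_pos_orthant_normalize:
  fixes e :: "('n::finite \<Rightarrow> real) \<Rightarrow> real" and n :: nat
  assumes e: "\<And>s. \<forall>j. 0 \<le> s j \<Longrightarrow> (\<Sum>j\<in>UNIV. s j) = 1 \<Longrightarrow>
      e s = (\<Sum>\<sigma>\<in>PiE {..<n} (\<lambda>_. UNIV). c \<sigma> * (\<Prod>i<n. s (\<sigma> i)))"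
  shows "rational_fun_on pos_orthant (\<lambda>r. e (\<lambda>j. r j / (\<Sum>i\<in>UNIV. r i)))"
  unfolding rational_fun_on_def
proof (intro exI conjI ballI)
  show "mpoly_fun (\<lambda>r. \<Sum>\<sigma>\<in>PiE {..<n} (\<lambda>_. UNIV). c \<sigma> * (\<Prod>i<n. r (\<sigma> i)))"
    by (rule mpoly_fun_sum_PiE_prod) simp
  show "mpoly_fun (\<lambda>r::'n \<Rightarrow> real. (\<Sum>j\<in>UNIV. r j) ^ n)"
    by (rule mpoly_fun_sum_power)
  fix r :: "'n \<Rightarrow> real"
  assume "r \<in> pos_orthant"
  then obtain j0 where r: "\<forall>j. 0 \<le> r j" and "r j0 \<noteq> 0"
    unfolding pos_orthant_def by auto
  define t where "t = (\<Sum>j\<in>UNIV. r j)"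
  have "r j0 \<le> t"
    unfolding t_def using r by (intro member_le_sum) auto
  with r \<open>r j0 \<noteq> 0\<close> have t: "0 < t"
    by (metis less_eq_real_def order.strict_trans2)
  then show "(\<Sum>j\<in>UNIV. r j) ^ n \<noteq> 0"
    unfolding t_def by simp
  have "e (\<lambda>j. r j / t) = (\<Sum>\<sigma>\<in>PiE {..<n} (\<lambda>_. UNIV). c \<sigma> * (\<Prod>i<n. r (\<sigma> i) / t))"
    using r t by (intro e) (auto simp: t_def sum_divide_distrib[symmetric])
  also have "\<dots> = (\<Sum>\<sigma>\<in>PiE {..<n} (\<lambda>_. UNIV). c \<sigma> * (\<Prod>i<n. r (\<sigma> i))) / t ^ n"
    by (simp add: prod_dividef sum_divide_distrib)
  finally show "e (\<lambda>j. r j / (\<Sum>i\<in>UNIV. r i))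
      = (\<Sum>\<sigma>\<in>PiE {..<n} (\<lambda>_. UNIV). c \<sigma> * (\<Prod>i<n. r (\<sigma> i))) / (\<Sum>j\<in>UNIV. r j) ^ n"
    unfolding t_def .
qed

lemma zero_homogeneous_on_normalize:
  fixes e :: "('n::finite \<Rightarrow> real) \<Rightarrow> real"
  shows   "zero_homogeneous_on U (\<lambda>r. e (\<lambda>j. r j / (\<Sum>i\<in>UNIV. r i)))"
  unfolding zero_homogeneous_on_def
proof (intro ballI allI impI)
  fix r :: "'n \<Rightarrow> real" and a :: real
  assume "a > 0"
  then have "(\<lambda>j. a * r j / (\<Sum>i\<in>UNIV. a * r i)) = (\<lambda>j. r j / (\<Sum>i\<in>UNIV. r i))"
    by (simp add: sum_distrib_left[symmetric])
  then show "e (\<lambda>j. a * r j / (\<Sum>i\<in>UNIV. a * r i)) = e (\<lambda>j. r j / (\<Sum>i\<in>UNIV. r i))"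
    by simp
qed

lemma ebar_polynomial_on_simplex:
  fixes D :: "'n::finite \<Rightarrow> 'z measure" and loss :: "'h \<Rightarrow> 'z \<Rightarrow> real"
  assumes prob_D: "\<And>j. prob_space (D j)" and sets_D: "\<And>j. sets (D j) = sets M"
    and meas: "(\<lambda>(S, z). loss (A S) z) \<in> borel_measurable (PiM {..<N} (\<lambda>_. M) \<Otimes>\<^sub>M M)"
    and integrable: "\<And>r. \<forall>j. 0 \<le> r j \<Longrightarrow> (\<Sum>j\<in>UNIV. r j) = 1 \<Longrightarrow>
        integrable (PiM {..<N} (\<lambda>_. mixture M D r) \<Otimes>\<^sub>M D k) (\<lambda>(S, z). loss (A S) z)"
  obtains c where "\<And>s. \<forall>j. 0 \<le> s j \<Longrightarrow> (\<Sum>j\<in>UNIV. s j) = 1 \<Longrightarrow>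
      ebar M D loss N A k s = (\<Sum>\<sigma>\<in>PiE {..<N} (\<lambda>_. UNIV). c \<sigma> * (\<Prod>i<N. s (\<sigma> i)))"
proof -
  let ?I = "{..<N}"
  define g where "g S = (\<integral>z. loss (A S) z \<partial>D k)" for S
  have finite_D: "finite_measure (D j)" for j
    using prob_D by (rule prob_space.axioms)
  have g_meas: "g \<in> borel_measurable (PiM ?I (\<lambda>_. M))"
  proof -
    have "(\<lambda>(S, z). loss (A S) z) \<in> borel_measurable (PiM ?I (\<lambda>_. M) \<Otimes>\<^sub>M D k)"
      using meas sets_D by (simp cong: measurable_cong_sets)
    then show ?thesis
      unfolding g_def
      using sigma_finite_measure.borel_measurable_lebesgue_integral[OF
          finite_measure.sigma_finite_measure[OF finite_D], of "\<lambda>S z. loss (A S) z"] by simp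
  qed
  have g_mix: "integrable (PiM ?I (\<lambda>_. mixture M D s)) g"
    if s: "\<forall>j. 0 \<le> s j" "(\<Sum>j\<in>UNIV. s j) = 1" for s
  proof -
    interpret mix: prob_space "PiM ?I (\<lambda>_. mixture M D s)"
      using prob_space_mixture[OF prob_D sets_D s] by (intro prob_space_PiM) auto
    interpret pair_sigma_finite "PiM ?I (\<lambda>_. mixture M D s)" "D k"
      by (simp add: pair_sigma_finite_def mix.sigma_finite_measure
          finite_measure.sigma_finite_measure[OF finite_D])
    show ?thesis
      unfolding g_def using integrable_fst[OF integrable[OF s]] by simp
  qed
  define u :: "'n \<Rightarrow> real" where "u j = 1 / real CARD('n)" for j
  have u: "\<forall>j. 0 \<le> u j" "(\<Sum>j\<in>UNIV. u j) = 1" "\<forall>j. 0 < u j"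
    unfolding u_def by auto
  have g_component: "integrable (PiM ?I (\<lambda>i. D (\<sigma> i))) g" if "\<sigma> \<in> PiE ?I (\<lambda>_. UNIV)" for \<sigma>
    using integrable_PiM_component_of_mixture[where D=D, OF finite_D sets_D _ u(3) that g_mix[OF u(1,2)]]
    by simp
  show ?thesis
  proof (rule that)
    fix s :: "'n \<Rightarrow> real"
    assume "\<forall>j. 0 \<le> s j" "(\<Sum>j\<in>UNIV. s j) = 1"
    have "ebar M D loss N A k s = (\<integral>S. g S \<partial>PiM ?I (\<lambda>_. mixture M D s))"
      unfolding ebar_def g_def ..
    also have "\<dots> = (\<Sum>\<sigma>\<in>PiE ?I (\<lambda>_. UNIV). (\<Prod>i<N. s (\<sigma> i)) * (\<integral>S. g S \<partial>PiM ?I (\<lambda>i. D (\<sigma> i))))"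
      using integral_PiM_mixture[where D=D, OF finite_D sets_D _ _ g_meas g_component] \<open>\<forall>j. 0 \<le> s j\<close>
      by simp
    finally show "ebar M D loss N A k s = (\<Sum>\<sigma>\<in>PiE ?I (\<lambda>_. UNIV).
        (\<integral>S. g S \<partial>PiM ?I (\<lambda>i. D (\<sigma> i))) * (\<Prod>i<N. s (\<sigma> i)))"
      by (simp add: mult.commute)
  qed
qed

theorem lemmaB1:
  fixes M :: "'z measure" and D :: "'n::finite \<Rightarrow> 'z measure"
    and loss :: "'h \<Rightarrow> 'z \<Rightarrow> real" and N :: nat and A :: "(nat \<Rightarrow> 'z) \<Rightarrow> 'h"
  assumes probD: "\<And>j. prob_space (D j)"
    and setsD: "\<And>j. sets (D j) = sets M"
    and N: "N \<ge> 1"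
    and meas: "(\<lambda>(S, z). loss (A S) z) \<in> borel_measurable (PiM {..<N} (\<lambda>_. M) \<Otimes>\<^sub>M M)"
    and finite_exp: "\<And>r k. (\<forall>j. 0 \<le> r j) \<Longrightarrow> (\<Sum>j\<in>UNIV. r j) = 1 \<Longrightarrow>
        integrable (PiM {..<N} (\<lambda>_. mixture M D r) \<Otimes>\<^sub>M D k) (\<lambda>(S, z). loss (A S) z)"
  shows "\<forall>k. rational_fun_on pos_orthant (fk M D loss N A k)
            \<and> zero_homogeneous_on pos_orthant (fk M D loss N A k)"
proof (intro allI conjI)
  fix k
  obtain c where "\<And>s. \<forall>j. 0 \<le> s j \<Longrightarrow> (\<Sum>j\<in>UNIV. s j) = 1 \<Longrightarrow>
      ebar M D loss N A k s = (\<Sum>\<sigma>\<in>PiE {..<N} (\<lambda>_. UNIV). c \<sigma> * (\<Prod>i<N. s (\<sigma> i)))"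
    using ebar_polynomial_on_simplex[where D=D, OF probD setsD meas finite_exp] by blast
  then show "rational_fun_on pos_orthant (fk M D loss N A k)"
    unfolding fk_def by (rule rational_fun_on_pos_orthant_normalize)
  show "zero_homogeneous_on pos_orthant (fk M D loss N A k)"
    unfolding fk_def by (rule zero_homogeneous_on_normalize)
qed

end
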